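(* Let $t\in[0,T]$ and let $X\in\mathbb{L}^\infty(\mathbb{R},\mathcal{F}_T)$ be such that $X>0$ a.s. Then there exists a unique $Z_t\in\mathbb{L}^0(\mathbb{R},\mathcal{F}_t)$ with $\operatorname{ess\,sup}_{\mathcal{F}_0}(Z_t)\in\mathbb{R}$ a.s. that satisfies $$\operatorname{ess\,sup}_{\mathcal{F}_0}(Z_t1_{F_t})=\operatorname{ess\,sup}_{\mathcal{F}_0}(X1_{F_t})\quad\text{for all }F_t\in\mathcal{F}_t.$$
   Context: Let $(\Omega,\mathcal{F},\mathbb{P})$ be a complete probability space and $(\mathcal{F}_t)_{t\in[0,T]}$ a filtration of complete sub-$\sigma$-algebras of $\mathcal{F}$ ($\mathcal{F}_s\subseteq\mathcal{F}_t$ for $s\le t$). $\mathbb{L}^0(G,\mathcal{G})$ denotes the $\mathcal{G}$-measurable random variables a.s. valued in $G$ and $\mathbb{L}^\infty(G,\mathcal{G})$ the essentially bounded ones. For a sub-$\sigma$-algebra $\mathcal{G}$, $\operatorname{ess\,sup}_{\mathcal{G}}(Y)$ is the smallest (a.s.) $\mathcal{G}$-measurable $\overline{\mathbb{R}}$-valued random variable dominating $Y$ a.s. *)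

theory Defs
  imports "HOL-Probability.Probability"
begin

definition complete_msp :: "'a measure \<Rightarrow> bool" where
  "complete_msp M \<longleftrightarrow> (\<forall>A B. B \<in> null_sets M \<and> A \<subseteq> B \<longrightarrow> A \<in> sets M)"

definition complete_subalgebra :: "'a measure \<Rightarrow> 'a measure \<Rightarrow> bool" where
  "complete_subalgebra M G \<longleftrightarrow> subalgebra M G \<and> null_sets M \<subseteq> sets G"

definition is_cond_esssup :: "'a measure \<Rightarrow> 'a measure \<Rightarrow> ('a \<Rightarrow> real) \<Rightarrow> ('a \<Rightarrow> ereal) \<Rightarrow> bool" where
  "is_cond_esssup M G Y E \<longleftrightarrow>
     E \<in> borel_measurable G \<and> (AE x in M. ereal (Y x) \<le> E x) \<and>
     (\<forall>E'. E' \<in> borel_measurable G \<and> (AE x in M. ereal (Y x) \<le> E' x) \<longrightarrow> (AE x in M. E x \<le> E' x))"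

definition cond_esssup :: "'a measure \<Rightarrow> 'a measure \<Rightarrow> ('a \<Rightarrow> real) \<Rightarrow> ('a \<Rightarrow> ereal)" where
  "cond_esssup M G Y = (SOME E. is_cond_esssup M G Y E)"

end

theory Submission
  imports Defs
begin

text \<open>Composing with a bounded strictly increasing map \<open>ereal \<rightarrow> real\<close> turns the search for
  the least \<open>G\<close>-measurable a.s. upper bound of \<open>Y\<close> into the minimisation of an expectation over
  a family closed under countable infima; a minimiser exists and is the conditional essential
  supremum.

  For the theorem, \<open>Z\<close> is the \<open>\<F>\<^sub>t\<close>-conditional essential supremum of \<open>X\<close>, which is finite since
  \<open>X\<close> is bounded. For \<open>A \<in> \<F>\<^sub>t\<close>, every \<open>\<F>\<^sub>0\<close>-measurable bound of \<open>X 1\<^sub>A\<close> is, on \<open>A\<close>, an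
  \<open>\<F>\<^sub>t\<close>-measurable bound of \<open>X\<close>, hence dominates \<open>Z\<close> there; this gives the identity on \<open>\<F>\<^sub>t\<close>-sets.
  For uniqueness, any two \<open>\<F>\<^sub>t\<close>-measurable solutions \<open>U\<close>, \<open>V\<close> are positive, as \<open>X\<close> is. On
  \<open>A = {U \<le> p} \<inter> {q \<le> V}\<close> with rationals \<open>0 < p < q\<close> the \<open>\<F>\<^sub>0\<close>-essential supremum of \<open>U 1\<^sub>A\<close>
  is at most \<open>p\<close> while that of \<open>V 1\<^sub>A\<close> is at least \<open>q\<close> on \<open>A\<close>; so every such \<open>A\<close> is null and
  \<open>V \<le> U\<close> a.s.\<close>

definition ereal_arctan :: "ereal \<Rightarrow> real" where
  "ereal_arctan e = (if e = \<infinity> then pi / 2 else if e = -\<infinity> then - pi / 2 else arctan (real_of_ereal e))"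

lemma strict_mono_ereal_arctan: "strict_mono ereal_arctan"
proof (rule strict_monoI)
  fix a b :: ereal assume "a < b"
  then show "ereal_arctan a < ereal_arctan b"
    using arctan_bounded by (cases a; cases b) (auto simp: ereal_arctan_def arctan_less_iff)
qed

lemma ereal_arctan_le_iff [simp]: "ereal_arctan a \<le> ereal_arctan b \<longleftrightarrow> a \<le> b"
  by (rule strict_mono_less_eq[OF strict_mono_ereal_arctan])

lemma ereal_arctan_eq_iff [simp]: "ereal_arctan a = ereal_arctan b \<longleftrightarrow> a = b"
  by (rule strict_mono_eq[OF strict_mono_ereal_arctan])

lemma abs_ereal_arctan_le: "\<bar>ereal_arctan e\<bar> \<le> pi"
  unfolding ereal_arctan_def using arctan_bounded[of "real_of_ereal e"] pi_gt_zero by auto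

lemma borel_measurable_ereal_arctan [measurable]: "ereal_arctan \<in> borel_measurable borel"
  unfolding ereal_arctan_def by measurable

definition cond_esssup_bounds :: "'a measure \<Rightarrow> 'a measure \<Rightarrow> ('a \<Rightarrow> real) \<Rightarrow> ('a \<Rightarrow> ereal) set" where
  "cond_esssup_bounds M G Y = {E. E \<in> borel_measurable G \<and> (AE x in M. ereal (Y x) \<le> E x)}"

lemma is_cond_esssup_iff_bounds:
  "is_cond_esssup M G Y E \<longleftrightarrow>
     E \<in> cond_esssup_bounds M G Y \<and> (\<forall>E' \<in> cond_esssup_bounds M G Y. AE x in M. E x \<le> E' x)"
  unfolding is_cond_esssup_def cond_esssup_bounds_def by auto

lemma integrable_ereal_arctan:
  assumes "finite_measure M" and "subalgebra M G" and "E \<in> cond_esssup_bounds M G Y"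
  shows "integrable M (\<lambda>x. ereal_arctan (E x))"
proof -
  interpret finite_measure M by fact
  have "E \<in> borel_measurable M"
    using assms(3) measurable_from_subalg[OF assms(2)] by (auto simp: cond_esssup_bounds_def)
  then show ?thesis
    by (intro integrable_const_bound[where B = pi]) (auto simp: abs_ereal_arctan_le)
qed

lemma INF_in_cond_esssup_bounds:
  assumes "\<And>n :: nat. E n \<in> cond_esssup_bounds M G Y"
  shows "(\<lambda>x. INF n. E n x) \<in> cond_esssup_bounds M G Y"
proof -
  have "AE x in M. \<forall>n. ereal (Y x) \<le> E n x"
    using assms by (simp add: AE_all_countable cond_esssup_bounds_def)
  then have "AE x in M. ereal (Y x) \<le> (INF n. E n x)"
    by eventually_elim (auto intro: INF_greatest)
  then show ?thesis
    using assms by (auto simp: cond_esssup_bounds_def intro: borel_measurable_INF)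
qed

lemma min_in_cond_esssup_bounds:
  assumes "E \<in> cond_esssup_bounds M G Y" and "E' \<in> cond_esssup_bounds M G Y"
  shows "(\<lambda>x. min (E x) (E' x)) \<in> cond_esssup_bounds M G Y"
  using assms unfolding cond_esssup_bounds_def by (auto elim: AE_mp intro: borel_measurable_min)

lemma cond_esssup_bounds_min_integral:
  assumes "finite_measure M" and "subalgebra M G"
  obtains E where "E \<in> cond_esssup_bounds M G Y"
    and "\<And>E'. E' \<in> cond_esssup_bounds M G Y \<Longrightarrow>
           (\<integral>x. ereal_arctan (E x) \<partial>M) \<le> (\<integral>x. ereal_arctan (E' x) \<partial>M)"
proof -
  define B where "B = cond_esssup_bounds M G Y"
  define I where "I E = (\<integral>x. ereal_arctan (E x) \<partial>M)" for E
  have integrable: "integrable M (\<lambda>x. ereal_arctan (E x))" if "E \<in> B" for E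
    using integrable_ereal_arctan[OF assms] that unfolding B_def .
  have "(\<integral>x. - pi \<partial>M) \<le> I E" if "E \<in> B" for E
    unfolding I_def using abs_ereal_arctan_le
    by (intro integral_mono finite_measure.integrable_const[OF assms(1)] integrable[OF that])
       (auto simp: abs_le_iff minus_le_iff)
  then have bdd: "bdd_below (I ` B)"
    by (auto simp: bdd_below_def)
  define m where "m = Inf (I ` B)"
  have "(\<lambda>_. \<infinity>) \<in> B"
    by (simp add: B_def cond_esssup_bounds_def)
  then have "\<exists>E \<in> B. I E < m + 1 / Suc n" for n :: nat
    using cInf_lessD[of "I ` B" "m + 1 / Suc n"] unfolding m_def by auto
  then obtain E where E: "\<And>n. E n \<in> B" "\<And>n. I (E n) < m + 1 / Suc n"
    by metis
  define E\<^sub>i\<^sub>n\<^sub>f where "E\<^sub>i\<^sub>n\<^sub>f x = (INF n. E n x)" for x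
  have "E\<^sub>i\<^sub>n\<^sub>f \<in> B"
    using E(1) INF_in_cond_esssup_bounds unfolding B_def E\<^sub>i\<^sub>n\<^sub>f_def by blast
  moreover have "I E\<^sub>i\<^sub>n\<^sub>f \<le> I E'" if "E' \<in> B" for E'
  proof -
    have "I E\<^sub>i\<^sub>n\<^sub>f \<le> m + e" if "0 < e" for e :: real
    proof -
      obtain n :: nat where n: "1 / Suc n < e"
        using \<open>0 < e\<close> nat_approx_posE by metis
      have "I E\<^sub>i\<^sub>n\<^sub>f \<le> I (E n)"
        unfolding I_def using integrable[OF \<open>E\<^sub>i\<^sub>n\<^sub>f \<in> B\<close>] integrable[OF E(1)]
        by (intro integral_mono) (auto simp: E\<^sub>i\<^sub>n\<^sub>f_def intro: INF_lower)
      then show ?thesis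
        using E(2)[of n] n by linarith
    qed
    then have "I E\<^sub>i\<^sub>n\<^sub>f \<le> m"
      by (rule field_le_epsilon)
    also have "m \<le> I E'"
      unfolding m_def using that bdd by (auto intro: cInf_lower)
    finally show ?thesis .
  qed
  ultimately show ?thesis
    using that unfolding B_def I_def by blast
qed

lemma is_cond_esssup_exists:
  assumes "finite_measure M" and "subalgebra M G"
  shows "\<exists>E. is_cond_esssup M G Y E"
proof -
  obtain E where E: "E \<in> cond_esssup_bounds M G Y"
    and minimal: "\<And>E'. E' \<in> cond_esssup_bounds M G Y \<Longrightarrow>
           (\<integral>x. ereal_arctan (E x) \<partial>M) \<le> (\<integral>x. ereal_arctan (E' x) \<partial>M)"
    using cond_esssup_bounds_min_integral[OF assms] by blast
  note integrable = integrable_ereal_arctan[OF assms]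
  have "AE x in M. E x \<le> E' x" if E': "E' \<in> cond_esssup_bounds M G Y" for E'
  proof -
    define W where "W x = min (E x) (E' x)" for x
    have W: "W \<in> cond_esssup_bounds M G Y"
      unfolding W_def by (rule min_in_cond_esssup_bounds[OF E E'])
    \<comment> \<open>\<open>W \<le> E\<close> pointwise while \<open>E\<close> minimises the expectation, so \<open>arctan E = arctan W\<close> a.e.\<close>
    have "(\<integral>x. ereal_arctan (E x) - ereal_arctan (W x) \<partial>M) = 0"
    proof (rule antisym)
      show "(\<integral>x. ereal_arctan (E x) - ereal_arctan (W x) \<partial>M) \<le> 0"
        using minimal[OF W] by (simp add: integral_diff integrable[OF E] integrable[OF W])
      show "0 \<le> (\<integral>x. ereal_arctan (E x) - ereal_arctan (W x) \<partial>M)"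
        by (intro integral_nonneg_AE AE_I2) (simp add: W_def)
    qed
    then have "AE x in M. ereal_arctan (E x) - ereal_arctan (W x) = 0"
      using integrable[OF E] integrable[OF W]
      by (subst (asm) integral_nonneg_eq_0_iff_AE) (auto simp: W_def)
    then show ?thesis
      by eventually_elim (simp add: W_def min_def split: if_splits)
  qed
  then show ?thesis
    using E by (auto simp: is_cond_esssup_iff_bounds)
qed

lemma is_cond_esssup_cond_esssup:
  assumes "finite_measure M" and "subalgebra M G"
  shows "is_cond_esssup M G Y (cond_esssup M G Y)"
  unfolding cond_esssup_def by (rule someI_ex[OF is_cond_esssup_exists[OF assms]])

lemma borel_measurable_cond_esssup:
  assumes "finite_measure M" and "subalgebra M G"
  shows "cond_esssup M G Y \<in> borel_measurable G"
  using is_cond_esssup_cond_esssup[OF assms] unfolding is_cond_esssup_def by auto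

lemma cond_esssup_upper:
  assumes "finite_measure M" and "subalgebra M G"
  shows "AE x in M. ereal (Y x) \<le> cond_esssup M G Y x"
  using is_cond_esssup_cond_esssup[OF assms] unfolding is_cond_esssup_def by auto

lemma cond_esssup_least:
  assumes "finite_measure M" and "subalgebra M G"
    and "E \<in> borel_measurable G" and "AE x in M. ereal (Y x) \<le> E x"
  shows "AE x in M. cond_esssup M G Y x \<le> E x"
  using is_cond_esssup_cond_esssup[OF assms(1,2)] assms(3,4) unfolding is_cond_esssup_def by auto

lemma cond_esssup_indicator_le_const:
  assumes "finite_measure M" and "subalgebra M G"
    and "AE x in M. x \<in> A \<longrightarrow> Y x \<le> c" and "0 \<le> c"
  shows "AE x in M. cond_esssup M G (\<lambda>y. Y y * indicator A y) x \<le> c"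
  using assms(3,4) by (intro cond_esssup_least[OF assms(1,2)]) (auto simp: indicator_def elim: AE_mp)

lemma cond_esssup_indicator_upper:
  assumes "finite_measure M" and "subalgebra M G"
  shows "AE x in M. x \<in> A \<longrightarrow> ereal (Y x) \<le> cond_esssup M G (\<lambda>y. Y y * indicator A y) x"
  using cond_esssup_upper[OF assms, of "\<lambda>y. Y y * indicator A y"] by eventually_elim auto

lemma cond_esssup_indicator_cond_esssup:
  assumes M: "finite_measure M" and G\<^sub>t: "subalgebra M G\<^sub>t" and G\<^sub>0: "subalgebra G\<^sub>t G\<^sub>0"
    and A: "A \<in> sets G\<^sub>t" and Z: "AE x in M. ereal (Z x) = cond_esssup M G\<^sub>t Y x"
  shows "AE x in M. cond_esssup M G\<^sub>0 (\<lambda>y. Z y * indicator A y) x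
                  = cond_esssup M G\<^sub>0 (\<lambda>y. Y y * indicator A y) x"
proof -
  have G\<^sub>0M: "subalgebra M G\<^sub>0"
    using G\<^sub>t G\<^sub>0 unfolding subalgebra_def by auto
  define E\<^sub>Z where "E\<^sub>Z = cond_esssup M G\<^sub>0 (\<lambda>y. Z y * indicator A y)"
  define E\<^sub>Y where "E\<^sub>Y = cond_esssup M G\<^sub>0 (\<lambda>y. Y y * indicator A y)"
  have E\<^sub>Y_upper: "AE x in M. ereal (Y x * indicator A x) \<le> E\<^sub>Y x"
    unfolding E\<^sub>Y_def by (rule cond_esssup_upper[OF M G\<^sub>0M])
  have "AE x in M. E\<^sub>Y x \<le> E\<^sub>Z x"
    unfolding E\<^sub>Y_def
  proof (rule cond_esssup_least[OF M G\<^sub>0M])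
    show "E\<^sub>Z \<in> borel_measurable G\<^sub>0"
      unfolding E\<^sub>Z_def by (rule borel_measurable_cond_esssup[OF M G\<^sub>0M])
    show "AE x in M. ereal (Y x * indicator A x) \<le> E\<^sub>Z x"
      using cond_esssup_upper[OF M G\<^sub>t, of Y] cond_esssup_upper[OF M G\<^sub>0M, of "\<lambda>y. Z y * indicator A y"] Z
      unfolding E\<^sub>Z_def by eventually_elim (auto simp: indicator_def)
  qed
  moreover have "AE x in M. E\<^sub>Z x \<le> E\<^sub>Y x"
    unfolding E\<^sub>Z_def
  proof (rule cond_esssup_least[OF M G\<^sub>0M])
    show E\<^sub>Y: "E\<^sub>Y \<in> borel_measurable G\<^sub>0"
      unfolding E\<^sub>Y_def by (rule borel_measurable_cond_esssup[OF M G\<^sub>0M])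
    \<comment> \<open>on \<open>A\<close>, the \<open>G\<^sub>0\<close>-bound \<open>E\<^sub>Y\<close> is a \<open>G\<^sub>t\<close>-bound of \<open>Y\<close>; off \<open>A\<close> it bounds \<open>0\<close>\<close>
    have "(\<lambda>x. if x \<in> A then E\<^sub>Y x else \<infinity>) \<in> borel_measurable G\<^sub>t"
      using measurable_from_subalg[OF G\<^sub>0 E\<^sub>Y] A by measurable
    then have "AE x in M. cond_esssup M G\<^sub>t Y x \<le> (if x \<in> A then E\<^sub>Y x else \<infinity>)"
      using E\<^sub>Y_upper by (intro cond_esssup_least[OF M G\<^sub>t]) (auto elim: AE_mp)
    then show "AE x in M. ereal (Z x * indicator A x) \<le> E\<^sub>Y x"
      using Z E\<^sub>Y_upper by eventually_elim (auto simp: indicator_def split: if_splits)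
  qed
  ultimately show ?thesis
    unfolding E\<^sub>Z_def E\<^sub>Y_def by eventually_elim auto
qed

lemma cond_esssup_bounded:
  assumes "finite_measure M" and "subalgebra M G" and "AE x in M. \<bar>Y x\<bar> \<le> C"
  shows "AE x in M. ereal (- C) \<le> cond_esssup M G Y x \<and> cond_esssup M G Y x \<le> ereal C"
proof -
  have "AE x in M. cond_esssup M G Y x \<le> ereal C"
    using assms(3) by (intro cond_esssup_least[OF assms(1,2)]) (auto elim: AE_mp)
  with cond_esssup_upper[OF assms(1,2), of Y] assms(3) show ?thesis
    by eventually_elim (auto intro: order_trans[rotated])
qed

lemma cond_esssup_indicator_le_imp_null:
  assumes "finite_measure M" and "subalgebra M G"
    and "AE x in M. x \<in> A \<longrightarrow> U x \<le> c" and "0 \<le> c" and "AE x in M. x \<in> A \<longrightarrow> c < V x"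
    and "AE x in M. cond_esssup M G (\<lambda>y. V y * indicator A y) x
                  \<le> cond_esssup M G (\<lambda>y. U y * indicator A y) x"
  shows "AE x in M. x \<notin> A"
  using cond_esssup_indicator_le_const[OF assms(1-4)] cond_esssup_indicator_upper[OF assms(1,2), of A V]
    assms(5,6)
proof eventually_elim
  case (elim x)
  show ?case
  proof
    assume "x \<in> A"
    then have "ereal c < ereal (V x)"
      using elim by simp
    also have "\<dots> \<le> cond_esssup M G (\<lambda>y. V y * indicator A y) x"
      using elim \<open>x \<in> A\<close> by simp
    also have "\<dots> \<le> cond_esssup M G (\<lambda>y. U y * indicator A y) x"
      using elim by simp
    also have "\<dots> \<le> ereal c"
      using elim by simp
    finally show False
      by simp
  qed
qed

lemma cond_esssup_indicator_le_imp_pos: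
  assumes "finite_measure M" and "subalgebra M G" and G\<^sub>t: "subalgebra M G\<^sub>t"
    and U: "U \<in> borel_measurable G\<^sub>t" and V: "AE x in M. 0 < V x"
    and le: "\<forall>A \<in> sets G\<^sub>t. AE x in M. cond_esssup M G (\<lambda>y. V y * indicator A y) x
                                   \<le> cond_esssup M G (\<lambda>y. U y * indicator A y) x"
  shows "AE x in M. 0 < U x"
proof -
  define A where "A = {x \<in> space G\<^sub>t. U x \<le> 0}"
  have "A \<in> sets G\<^sub>t"
    unfolding A_def using U by measurable
  then have "AE x in M. x \<notin> A"
    using V le by (intro cond_esssup_indicator_le_imp_null[OF assms(1,2), of A U 0 V]) (auto simp: A_def)
  then show ?thesis
    using G\<^sub>t by (auto simp: A_def subalgebra_def not_le elim: AE_mp)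
qed

lemma cond_esssup_indicator_le_imp_le:
  assumes "finite_measure M" and "subalgebra M G" and G\<^sub>t: "subalgebra M G\<^sub>t"
    and U: "U \<in> borel_measurable G\<^sub>t" and V: "V \<in> borel_measurable G\<^sub>t"
    and U_pos: "AE x in M. 0 < U x"
    and le: "\<forall>A \<in> sets G\<^sub>t. AE x in M. cond_esssup M G (\<lambda>y. V y * indicator A y) x
                                   \<le> cond_esssup M G (\<lambda>y. U y * indicator A y) x"
  shows "AE x in M. V x \<le> U x"
proof -
  have "AE x in M. 0 < p \<longrightarrow> p < q \<longrightarrow> \<not> (U x \<le> of_rat p \<and> of_rat q \<le> V x)" for p q :: rat
  proof (cases "0 < p \<and> p < q")
    case True
    define A where "A = {x \<in> space G\<^sub>t. U x \<le> of_rat p \<and> of_rat q \<le> V x}"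
    have "A \<in> sets G\<^sub>t"
      unfolding A_def using U V by measurable
    moreover have "0 \<le> real_of_rat p" "real_of_rat p < of_rat q"
      using True by (auto simp: of_rat_less)
    ultimately have "AE x in M. x \<notin> A"
      using le
      by (intro cond_esssup_indicator_le_imp_null[OF assms(1,2), of A U "of_rat p" V])
         (auto simp: A_def)
    then show ?thesis
      using G\<^sub>t by (auto simp: A_def subalgebra_def elim: AE_mp)
  qed simp
  then have "AE x in M. \<forall>p q :: rat. 0 < p \<longrightarrow> p < q \<longrightarrow> \<not> (U x \<le> of_rat p \<and> of_rat q \<le> V x)"
    by (simp add: AE_all_countable)
  then show ?thesis
    using U_pos
  proof eventually_elim
    case (elim x)
    show ?case
    proof (rule ccontr)
      assume "\<not> V x \<le> U x"
      then obtain p where p: "U x < of_rat p" "of_rat p < V x"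
        using of_rat_dense by (metis not_le)
      then obtain q where q: "of_rat p < (of_rat q :: real)" "of_rat q < V x"
        using of_rat_dense by metis
      have "0 < (of_rat p :: real)"
        using p elim(2) by linarith
      then have "0 < p" "p < q"
        using q by (simp_all add: of_rat_less)
      then show False
        using elim(1)[rule_format, of p q] p q by simp
    qed
  qed
qed

lemma cond_esssup_indicator_eq_unique:
  assumes "finite_measure M" and "subalgebra M G" and "subalgebra M G\<^sub>t"
    and U: "U \<in> borel_measurable G\<^sub>t" and V: "V \<in> borel_measurable G\<^sub>t" and X: "AE x in M. 0 < X x"
    and U_eq: "\<forall>A \<in> sets G\<^sub>t. AE x in M. cond_esssup M G (\<lambda>y. U y * indicator A y) x
                                     = cond_esssup M G (\<lambda>y. X y * indicator A y) x"
    and V_eq: "\<forall>A \<in> sets G\<^sub>t. AE x in M. cond_esssup M G (\<lambda>y. V y * indicator A y) x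
                                     = cond_esssup M G (\<lambda>y. X y * indicator A y) x"
  shows "AE x in M. U x = V x"
proof -
  have le: "\<forall>A \<in> sets G\<^sub>t. AE x in M. cond_esssup M G (\<lambda>y. W' y * indicator A y) x
                                     \<le> cond_esssup M G (\<lambda>y. W y * indicator A y) x"
    if "W \<in> {X, U, V}" "W' \<in> {X, U, V}" for W W'
    using that U_eq V_eq by (fastforce elim: AE_mp)
  have U_pos: "AE x in M. 0 < U x" and V_pos: "AE x in M. 0 < V x"
    using le[of U X] le[of V X] by (auto intro: cond_esssup_indicator_le_imp_pos[OF assms(1-3) _ X] U V)
  have "AE x in M. V x \<le> U x" "AE x in M. U x \<le> V x"
    using le[of U V] le[of V U]
    by (auto intro: cond_esssup_indicator_le_imp_le[OF assms(1-3)] U V U_pos V_pos)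
  then show ?thesis
    by eventually_elim simp
qed

theorem mainTheorem18:
  fixes M :: "'a measure" and F :: "real \<Rightarrow> 'a measure" and T t :: real and X :: "'a \<Rightarrow> real"
  assumes "prob_space M" and "complete_msp M"
    and "\<And>s. s \<in> {0..T} \<Longrightarrow> complete_subalgebra M (F s)"
    and "\<And>s r. s \<in> {0..T} \<Longrightarrow> r \<in> {0..T} \<Longrightarrow> s \<le> r \<Longrightarrow> sets (F s) \<subseteq> sets (F r)"
    and "t \<in> {0..T}"
    and "X \<in> borel_measurable (F T)" and "\<exists>C. AE x in M. \<bar>X x\<bar> \<le> C"
    and "AE x in M. X x > 0"
  shows "\<exists>Z. Z \<in> borel_measurable (F t)
           \<and> (AE x in M. cond_esssup M (F 0) Z x \<noteq> \<infinity> \<and> cond_esssup M (F 0) Z x \<noteq> -\<infinity>)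
           \<and> (\<forall>A \<in> sets (F t). AE x in M.
                cond_esssup M (F 0) (\<lambda>y. Z y * indicator A y) x = cond_esssup M (F 0) (\<lambda>y. X y * indicator A y) x)
           \<and> (\<forall>Z'. Z' \<in> borel_measurable (F t)
                 \<and> (AE x in M. cond_esssup M (F 0) Z' x \<noteq> \<infinity> \<and> cond_esssup M (F 0) Z' x \<noteq> -\<infinity>)
                 \<and> (\<forall>A \<in> sets (F t). AE x in M.
                      cond_esssup M (F 0) (\<lambda>y. Z' y * indicator A y) x = cond_esssup M (F 0) (\<lambda>y. X y * indicator A y) x)
                 \<longrightarrow> (AE x in M. Z' x = Z x))"
proof -
  have M: "finite_measure M"
    using assms(1) by (rule prob_space.finite_measure)
  have F\<^sub>0: "subalgebra M (F 0)" and F\<^sub>t: "subalgebra M (F t)"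
    using assms(3)[of 0] assms(3,5) by (auto simp: complete_subalgebra_def)
  have F\<^sub>0\<^sub>t: "subalgebra (F t) (F 0)"
    using F\<^sub>0 F\<^sub>t assms(4)[of 0 t] assms(5) by (auto simp: subalgebra_def)
  obtain C where C: "AE x in M. \<bar>X x\<bar> \<le> C"
    using assms(7) by blast
  define Z where "Z x = real_of_ereal (cond_esssup M (F t) X x)" for x
  have Z_measurable: "Z \<in> borel_measurable (F t)"
    unfolding Z_def using borel_measurable_cond_esssup[OF M F\<^sub>t] by measurable
  have Z: "AE x in M. ereal (Z x) = cond_esssup M (F t) X x \<and> \<bar>Z x\<bar> \<le> C"
    using cond_esssup_bounded[OF M F\<^sub>t C]
  proof eventually_elim
    case (elim x)
    then show ?case
      by (cases "cond_esssup M (F t) X x") (auto simp: Z_def)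
  qed
  have "AE x in M. cond_esssup M (F 0) Z x \<noteq> \<infinity> \<and> cond_esssup M (F 0) Z x \<noteq> -\<infinity>"
    using cond_esssup_bounded[OF M F\<^sub>0, of Z C] Z by (auto elim: AE_mp)
  moreover have Z_eq: "\<forall>A \<in> sets (F t). AE x in M.
      cond_esssup M (F 0) (\<lambda>y. Z y * indicator A y) x = cond_esssup M (F 0) (\<lambda>y. X y * indicator A y) x"
    using cond_esssup_indicator_cond_esssup[OF M F\<^sub>t F\<^sub>0\<^sub>t] Z by (auto elim: AE_mp)
  moreover have "AE x in M. Z' x = Z x"
    if "Z' \<in> borel_measurable (F t)" and "\<forall>A \<in> sets (F t). AE x in M.
      cond_esssup M (F 0) (\<lambda>y. Z' y * indicator A y) x = cond_esssup M (F 0) (\<lambda>y. X y * indicator A y) x"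
    for Z'
    using that assms(8) Z_measurable Z_eq by (intro cond_esssup_indicator_eq_unique[OF M F\<^sub>0 F\<^sub>t]) auto
  ultimately show ?thesis
    using Z_measurable by blast
qed

end
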